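(* There exist an absolute constant $C$ and a threshold $\alpha_0$ such that for every error-free uncertain priors coding scheme $(E,D)$ and every integer $\alpha\geq\alpha_0$, there exist $\alpha$-close priors $P,Q\in\Delta(M)$ for which \[ \mathbb{E}_{m,R}\big[|E(m,\alpha,R,P)|\big]-\ell(P)\;\geq\;2\log\alpha-3\log\log\alpha-C, \] where $m\sim P$ and $R$ is uniformly random. In particular, the redundancy of every error-free uncertain priors coding scheme is at least $2\log\alpha-3\log\log\alpha-O(1)$.
   Context: All logarithms are base 2. $M$ is a set of messages and $\Delta(M)$ the set of probability distributions on $M$. For $\alpha\geq1$, $P,Q\in\Delta(M)$ are $\alpha$-close if $\frac{1}{\alpha}Q(m)\leq P(m)\leq\alpha Q(m)$ for every $m\in M$. An error-free uncertain priors coding scheme is a pair of functions $E:M\times\mathbb{N}\times\{0,1\}^{\mathbb{N}}\times\Delta(M)\to\{0,1\}^*$ and $D:\{0,1\}^*\times\mathbb{N}\times\{0,1\}^{\mathbb{N}}\times\Delta(M)\to M$ such that for every $m\in M$, $\alpha\in\mathbb{N}$, $R\in\{0,1\}^{\mathbb{N}}$, $P\in\Delta(M)$ and every $Q\in\Delta(M)$ that is $\alpha$-close to $P$, $D(E(m,\alpha,R,P),\alpha,R,Q)=m$. Here $R$ is a shared random string. The encoding length of $(E,D)$ for $P$ and $\alpha$ is $\mathbb{E}_{m,R}[|E(m,\alpha,R,P)|]$ with $m\sim P$ and $R$ uniform. $\ell(P)$ denotes the optimal one-to-one encoding length of $P$: the minimum over injective maps $c:M\to\{0,1\}^*$ of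 $\mathbb{E}_{m\sim P}[|c(m)|]$. The redundancy of $(E,D)$ for $\alpha$ is $\max_{P\in\Delta(M)}\{\mathbb{E}_{m,R}[|E(m,\alpha,R,P)|]-\ell(P)\}$. *)

theory Defs
  imports "HOL-Probability.Probability"
begin

text \<open>Messages: M = nat (a countably infinite message set). Priors: nat pmf.
  Shared randomness R :: nat \<Rightarrow> bool, distributed as independent fair coins.\<close>

definition coins :: "(nat \<Rightarrow> bool) measure" where
  "coins = PiM UNIV (\<lambda>_. measure_pmf (bernoulli_pmf (1/2)))"

definition alpha_close :: "real \<Rightarrow> nat pmf \<Rightarrow> nat pmf \<Rightarrow> bool" where
  "alpha_close \<alpha> P Q \<longleftrightarrow> (\<forall>m. (1/\<alpha>) * pmf Q m \<le> pmf P m \<and> pmf P m \<le> \<alpha> * pmf Q m)"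

definition error_free_scheme ::
  "(nat \<Rightarrow> nat \<Rightarrow> (nat \<Rightarrow> bool) \<Rightarrow> nat pmf \<Rightarrow> bool list)
   \<Rightarrow> (bool list \<Rightarrow> nat \<Rightarrow> (nat \<Rightarrow> bool) \<Rightarrow> nat pmf \<Rightarrow> nat) \<Rightarrow> bool" where
  "error_free_scheme E D \<longleftrightarrow>
     (\<forall>m \<alpha> R P Q. alpha_close (real \<alpha>) P Q \<longrightarrow> D (E m \<alpha> R P) \<alpha> R Q = m)"

definition enc_length ::
  "(nat \<Rightarrow> nat \<Rightarrow> (nat \<Rightarrow> bool) \<Rightarrow> nat pmf \<Rightarrow> bool list) \<Rightarrow> nat pmf \<Rightarrow> nat \<Rightarrow> ennreal" where
  "enc_length E P \<alpha> =
     (\<integral>\<^sup>+ m. (\<integral>\<^sup>+ R. ennreal (real (length (E m \<alpha> R P))) \<partial>coins) \<partial>measure_pmf P)"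

definition opt_len :: "nat pmf \<Rightarrow> ennreal" where
  "opt_len P = (INF c \<in> {c :: nat \<Rightarrow> bool list. inj c}.
                  \<integral>\<^sup>+ m. ennreal (real (length (c m))) \<partial>measure_pmf P)"

end

theory Submission
  imports Defs "HOL-Combinatorics.Transposition"
begin

text \<open>
  Take \<open>k = 2^T \<approx> \<alpha>\<^sup>2 / log \<alpha>\<close> messages and the priors \<open>P\<^sub>i\<close> (\<open>i < k\<close>) giving message \<open>i\<close>
  weight \<open>\<alpha>\<^sup>2\<close> and every other message weight \<open>1\<close>, normalised. Any two of them are
  \<open>\<alpha>\<close>-close to a common prior \<open>Q\<^sub>i\<^sub>j\<close>, so a decoder holding \<open>Q\<^sub>i\<^sub>j\<close> must recover \<open>m\<close>
  from \<open>E(m, P\<^sub>i)\<close> and \<open>m'\<close> from \<open>E(m', P\<^sub>j)\<close>: for fixed shared randomness, equal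
  encodings force equal messages across all priors. Choosing for every \<open>m\<close> its shortest
  encoding therefore yields an injective code on \<open>k\<close> messages, of total length at least
  about \<open>k T\<close>. Since \<open>\<Sum>\<^sub>i P\<^sub>i(m) = 1\<close>, the expected lengths of the \<open>P\<^sub>i\<close> add up to at least
  that, so some \<open>P\<^sub>i\<close> has expected length \<open>\<ge> T - 2\<close>. On the other hand \<open>opt_len P\<^sub>i \<le> 2\<close>:
  message \<open>i\<close> gets the empty word, and all others have total weight \<open>\<approx> k/\<alpha>\<^sup>2\<close> and
  length \<open>\<le> T \<le> 2 log \<alpha>\<close>. The gap \<open>T - 4\<close> is \<open>2 log \<alpha> - log log \<alpha> - O(1)\<close>.
\<close>

fun binary_code :: "nat \<Rightarrow> bool list" where
  "binary_code 0 = []"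
| "binary_code (Suc n) = even n # binary_code (n div 2)"

lemma two_power_length_binary_code_le: "2 ^ length (binary_code n) \<le> n + 1"
  by (induction n rule: binary_code.induct) auto

lemma inj_binary_code: "inj binary_code"
proof (rule injI)
  show "binary_code m = binary_code n \<Longrightarrow> m = n" for m n
  proof (induction m arbitrary: n rule: binary_code.induct)
    case 1
    then show ?case by (cases n) auto
  next
    case (2 m)
    then obtain n' where n: "n = Suc n'" by (cases n) auto
    with 2 have "even m = even n'" "m div 2 = n' div 2" by auto
    then have "m = n'" by (metis div_mult_mod_eq even_iff_mod_2_eq_zero odd_iff_mod_2_eq_one)
    with n show ?case by simp
  qed
qed

lemma card_bool_lists_length_le: "card {xs :: bool list. length xs \<le> T} < 2 ^ (T + 1)"
proof -
  have "card {xs :: bool list. length xs \<le> T} = (\<Sum>i\<le>T. 2 ^ i)"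
    using card_lists_length_le[of "UNIV :: bool set" T] by simp
  also have "\<dots> < 2 ^ (T + 1)"
    by (induction T) auto
  finally show ?thesis .
qed

text \<open>Truncating at \<open>T\<close> makes the bound go through by induction on \<open>T\<close>: raising the cap adds
  one for every codeword longer than \<open>T\<close>, and fewer than \<open>2^(T+1)\<close> codewords are not.\<close>

lemma sum_min_length_ge:
  fixes c :: "'a \<Rightarrow> bool list"
  assumes "finite S" "inj_on c S"
  shows "real T * card S - 2 ^ (T + 1) + 2 \<le> (\<Sum>m\<in>S. real (min (length (c m)) T))"
proof (induction T)
  case 0
  then show ?case by simp
next
  case (Suc T)
  define short where "short = {m\<in>S. length (c m) \<le> T}"
  have "card short = card (c ` short)"
    using assms by (intro card_image[symmetric]) (auto simp: short_def intro: inj_on_subset)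
  also have "\<dots> \<le> card {xs :: bool list. length xs \<le> T}"
    using finite_lists_length_le[of "UNIV :: bool set" T]
    by (intro card_mono) (auto simp: short_def)
  finally have "card short + 1 \<le> (2 :: nat) ^ (T + 1)"
    using card_bool_lists_length_le[of T] by linarith
  then have "real (card short + 1) \<le> real ((2 :: nat) ^ (T + 1))"
    by (simp only: of_nat_le_iff)
  then have "real (card short) + 1 \<le> 2 ^ (T + 1)"
    by simp
  moreover have "card S = card short + card (S - short)"
    using assms(1) by (simp add: short_def card_Diff_subset card_mono)
  moreover have "(\<Sum>m\<in>S. real (min (length (c m)) (Suc T)))
      = (\<Sum>m\<in>S. real (min (length (c m)) T)) + card (S - short)"
  proof -
    have "(\<Sum>m\<in>S. real (min (length (c m)) (Suc T)))
        = (\<Sum>m\<in>S. real (min (length (c m)) T) + (if m \<in> short then 0 else 1))"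
      by (intro sum.cong) (auto simp: short_def)
    also have "\<dots> = (\<Sum>m\<in>S. real (min (length (c m)) T)) + card (S - short)"
      using assms(1) by (simp add: sum.distrib sum.If_cases Diff_eq Int_def)
    finally show ?thesis .
  qed
  moreover have "real (Suc T) * card S = real T * card S + card S"
    by (simp add: algebra_simps)
  ultimately show ?case
    using Suc.IH by simp
qed

lemma sum_weighted_length_ge:
  fixes p :: "'i \<Rightarrow> 'a \<Rightarrow> real" and f :: "'i \<Rightarrow> 'a \<Rightarrow> bool list"
  assumes "finite I" "I \<noteq> {}" "finite S"
    and nonneg: "\<And>i m. i \<in> I \<Longrightarrow> m \<in> S \<Longrightarrow> p i m \<ge> 0"
    and total: "\<And>m. m \<in> S \<Longrightarrow> (\<Sum>i\<in>I. p i m) = 1"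
    and distinct: "\<And>i j m m'. i \<in> I \<Longrightarrow> j \<in> I \<Longrightarrow> m \<in> S \<Longrightarrow> m' \<in> S \<Longrightarrow>
      f i m = f j m' \<Longrightarrow> m = m'"
  shows "real T * card S - 2 ^ (T + 1) + 2 \<le> (\<Sum>i\<in>I. \<Sum>m\<in>S. p i m * length (f i m))"
proof -
  from \<open>I \<noteq> {}\<close> obtain i0 where "i0 \<in> I" by blast
  have "\<forall>m. \<exists>i. i \<in> I \<and> (\<forall>j\<in>I. length (f i m) \<le> length (f j m))"
    using ex_has_least_nat[of "\<lambda>i. i \<in> I" i0 "\<lambda>i. length (f i m)" for m] \<open>i0 \<in> I\<close> by blast
  from choice[OF this] obtain shortest
    where "\<forall>m. shortest m \<in> I \<and> (\<forall>j\<in>I. length (f (shortest m) m) \<le> length (f j m))"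
    by blast
  then have shortest: "\<And>m. shortest m \<in> I"
    "\<And>m j. j \<in> I \<Longrightarrow> length (f (shortest m) m) \<le> length (f j m)"
    by auto
  define c where "c m = f (shortest m) m" for m
  have "inj_on c S"
    by (intro inj_onI distinct[OF shortest(1) shortest(1)]) (simp_all add: c_def)
  then have "real T * card S - 2 ^ (T + 1) + 2 \<le> (\<Sum>m\<in>S. real (min (length (c m)) T))"
    by (rule sum_min_length_ge[OF \<open>finite S\<close>])
  also have "\<dots> \<le> (\<Sum>m\<in>S. \<Sum>i\<in>I. p i m * length (c m))"
  proof (rule sum_mono)
    fix m assume "m \<in> S"
    have "real (min (length (c m)) T) \<le> (\<Sum>i\<in>I. p i m) * length (c m)"
      using total[OF \<open>m \<in> S\<close>] by simp
    then show "real (min (length (c m)) T) \<le> (\<Sum>i\<in>I. p i m * length (c m))"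
      by (simp only: sum_distrib_right)
  qed
  also have "\<dots> \<le> (\<Sum>m\<in>S. \<Sum>i\<in>I. p i m * length (f i m))"
  proof (intro sum_mono mult_left_mono)
    fix m i assume "m \<in> S" "i \<in> I"
    show "real (length (c m)) \<le> real (length (f i m))"
      using shortest(2)[OF \<open>i \<in> I\<close>] by (simp add: c_def)
    show "0 \<le> p i m"
      using \<open>i \<in> I\<close> \<open>m \<in> S\<close> by (rule nonneg)
  qed
  also have "\<dots> = (\<Sum>i\<in>I. \<Sum>m\<in>S. p i m * length (f i m))"
    by (rule sum.swap)
  finally show ?thesis .
qed

lemma sum_if_mem_const:
  fixes x y :: "'b :: semiring_1"
  assumes "finite A" "S \<subseteq> A"
  shows "(\<Sum>m\<in>A. if m \<in> S then x else y) = of_nat (card S) * x + of_nat (card A - card S) * y"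
proof -
  have "A \<inter> {m. m \<in> S} = S" "A \<inter> - {m. m \<in> S} = A - S"
    using assms(2) by auto
  moreover have "card (A - S) = card A - card S"
    using assms by (meson card_Diff_subset finite_subset)
  ultimately show ?thesis
    using assms(1) by (simp add: sum.If_cases)
qed

lemma pmf_embed_pmf_lessThan:
  fixes f :: "nat \<Rightarrow> real"
  assumes "\<And>m. f m \<ge> 0" "\<And>m. m \<ge> k \<Longrightarrow> f m = 0" "(\<Sum>m<k. f m) = 1"
  shows "pmf (embed_pmf f) m = f m"
proof (rule pmf_embed_pmf)
  have "(\<integral>\<^sup>+ x. ennreal (f x) \<partial>count_space UNIV) = (\<Sum>x<k. ennreal (f x))"
    using assms(2) by (intro nn_integral_count_space'[of "{..<k}"]) auto
  then show "(\<integral>\<^sup>+ x. ennreal (f x) \<partial>count_space UNIV) = 1"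
    using assms(1,3) by (simp add: sum_ennreal)
qed (rule assms(1))

lemma alpha_close_refl:
  assumes "a \<ge> 1"
  shows "alpha_close a P P"
  unfolding alpha_close_def
proof
  fix m
  have "pmf P m \<le> a * pmf P m"
    using mult_right_mono[OF assms pmf_nonneg] by simp
  with assms show "1 / a * pmf P m \<le> pmf P m \<and> pmf P m \<le> a * pmf P m"
    by (simp add: divide_le_eq mult.commute)
qed

lemma alpha_close_scaledI:
  assumes "a > 0" "d > 0"
    and "\<And>m. pmf P m = u m / d" "\<And>m. pmf Q m = v m / d"
    and "\<And>m. v m \<le> a * u m" "\<And>m. u m \<le> a * v m"
  shows "alpha_close a P Q"
  unfolding alpha_close_def assms(3,4)
  using assms(1,2,5,6) by (simp add: field_simps)

lemma error_free_scheme_encoding_eq_imp_eq: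
  assumes "error_free_scheme E D" "alpha_close (real \<alpha>) P Q" "alpha_close (real \<alpha>) P' Q"
    and "E m \<alpha> R P = E m' \<alpha> R P'"
  shows "m = m'"
  using assms unfolding error_free_scheme_def by metis

lemma prob_space_coins: "prob_space coins"
  unfolding coins_def by (rule prob_space_PiM) (simp add: prob_space_measure_pmf)

lemma opt_len_le_nn_integral:
  fixes c :: "nat \<Rightarrow> bool list"
  assumes "inj c"
  shows "opt_len P \<le> (\<integral>\<^sup>+ m. ennreal (real (length (c m))) \<partial>measure_pmf P)"
  unfolding opt_len_def by (rule INF_lower) (simp add: assms)

lemma opt_len_le_off_point:
  assumes "set_pmf P \<subseteq> {..<2 ^ T}" "i < 2 ^ T"
  shows "opt_len P \<le> ennreal (T * (1 - pmf P i))"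
proof -
  define c where "c = binary_code \<circ> Transposition.transpose i 0"
  have "inj c"
    unfolding c_def by (intro inj_compose inj_binary_code inj_transpose)
  have length_c: "ennreal (length (c m)) \<le> ennreal T * indicator (- {i}) m" if "m < 2 ^ T" for m
  proof (cases "m = i")
    case False
    have "Transposition.transpose i 0 m < 2 ^ T"
      using that assms(2) by (auto simp: Transposition.transpose_def)
    have "2 ^ length (c m) \<le> Transposition.transpose i 0 m + 1"
      using two_power_length_binary_code_le by (simp add: c_def)
    also have "\<dots> \<le> 2 ^ T"
      using \<open>Transposition.transpose i 0 m < 2 ^ T\<close> by simp
    finally have "2 ^ length (c m) \<le> (2 :: nat) ^ T" .
    then have "length (c m) \<le> T"
      by (rule power_le_imp_le_exp[rotated]) simp
    with False show ?thesis
      by simp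
  qed (simp add: c_def)
  have "opt_len P \<le> (\<integral>\<^sup>+ m. ennreal (real (length (c m))) \<partial>measure_pmf P)"
    using \<open>inj c\<close> by (rule opt_len_le_nn_integral)
  also have "\<dots> \<le> (\<integral>\<^sup>+ m. ennreal T * indicator (- {i}) m \<partial>measure_pmf P)"
    using assms(1) length_c by (intro nn_integral_mono_AE AE_pmfI) auto
  also have "\<dots> = ennreal T * emeasure (measure_pmf P) (- {i})"
    by (simp add: nn_integral_cmult_indicator)
  also have "\<dots> = ennreal (T * (1 - pmf P i))"
    using measure_pmf.prob_compl[of "{i}" P]
    by (simp add: measure_pmf.emeasure_eq_measure measure_pmf_single ennreal_mult pmf_le_1 Compl_eq_Diff_UNIV)
  finally show ?thesis .
qed

lemma enc_length_finite_support:
  assumes meas: "\<And>m. (\<lambda>R. real (length (E m \<alpha> R P))) \<in> borel_measurable coins"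
    and support: "set_pmf P \<subseteq> {..<k}"
  shows "enc_length E P \<alpha> = (\<integral>\<^sup>+R. ennreal (\<Sum>m<k. pmf P m * length (E m \<alpha> R P)) \<partial>coins)"
proof -
  note meas[measurable]
  have "enc_length E P \<alpha> = (\<Sum>m<k. (\<integral>\<^sup>+R. ennreal (length (E m \<alpha> R P)) \<partial>coins) * pmf P m)"
    unfolding enc_length_def using support by (intro nn_integral_measure_pmf_support) auto
  also have "\<dots> = (\<Sum>m<k. \<integral>\<^sup>+R. ennreal (pmf P m * length (E m \<alpha> R P)) \<partial>coins)"
    using meas by (simp add: ennreal_mult' nn_integral_cmult mult.commute)
  also have "\<dots> = (\<integral>\<^sup>+R. (\<Sum>m<k. ennreal (pmf P m * length (E m \<alpha> R P))) \<partial>coins)"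
    by (intro nn_integral_sum[symmetric]) measurable
  also have "\<dots> = (\<integral>\<^sup>+R. ennreal (\<Sum>m<k. pmf P m * length (E m \<alpha> R P)) \<partial>coins)"
    by (simp add: sum_ennreal)
  finally show ?thesis .
qed

lemma sum_enc_length_ge:
  fixes P :: "nat \<Rightarrow> nat pmf"
  assumes meas: "\<And>m i. (\<lambda>R. real (length (E m \<alpha> R (P i)))) \<in> borel_measurable coins"
    and "k > 0"
    and support: "\<And>i. i < k \<Longrightarrow> set_pmf (P i) \<subseteq> {..<k}"
    and total: "\<And>m. m < k \<Longrightarrow> (\<Sum>i<k. pmf (P i) m) = 1"
    and distinct: "\<And>R i j m m'. i < k \<Longrightarrow> j < k \<Longrightarrow> m < k \<Longrightarrow> m' < k \<Longrightarrow>
      E m \<alpha> R (P i) = E m' \<alpha> R (P j) \<Longrightarrow> m = m'"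
  shows "ennreal (real T * k - 2 ^ (T + 1) + 2) \<le> (\<Sum>i<k. enc_length E (P i) \<alpha>)"
proof -
  interpret coins: prob_space coins
    by (rule prob_space_coins)
  note meas[measurable]
  define w where "w R = (\<Sum>i<k. \<Sum>m<k. pmf (P i) m * length (E m \<alpha> R (P i)))" for R
  have "(\<Sum>i<k. enc_length E (P i) \<alpha>)
      = (\<Sum>i<k. \<integral>\<^sup>+R. ennreal (\<Sum>m<k. pmf (P i) m * length (E m \<alpha> R (P i))) \<partial>coins)"
    by (intro sum.cong refl enc_length_finite_support meas support) simp
  also have "\<dots> = (\<integral>\<^sup>+R. (\<Sum>i<k. ennreal (\<Sum>m<k. pmf (P i) m * length (E m \<alpha> R (P i)))) \<partial>coins)"
    by (intro nn_integral_sum[symmetric]) measurable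
  also have "\<dots> = (\<integral>\<^sup>+R. ennreal (w R) \<partial>coins)"
    by (simp add: w_def sum_ennreal sum_nonneg)
  finally have sum_eq: "(\<Sum>i<k. enc_length E (P i) \<alpha>) = (\<integral>\<^sup>+R. ennreal (w R) \<partial>coins)" .
  have "real T * k - 2 ^ (T + 1) + 2 \<le> w R" for R
    using sum_weighted_length_ge[of "{..<k}" "{..<k}" "\<lambda>i m. pmf (P i) m" "\<lambda>i m. E m \<alpha> R (P i)" T]
      \<open>k > 0\<close> total distinct by (auto simp: w_def)
  then have "(\<integral>\<^sup>+_. ennreal (real T * k - 2 ^ (T + 1) + 2) \<partial>coins) \<le> (\<integral>\<^sup>+R. ennreal (w R) \<partial>coins)"
    by (intro nn_integral_mono ennreal_leI)
  then have "ennreal (real T * k - 2 ^ (T + 1) + 2) \<le> (\<integral>\<^sup>+R. ennreal (w R) \<partial>coins)"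
    by (simp add: coins.emeasure_space_1)
  with sum_eq show ?thesis
    by simp
qed

lemma ex_ge_of_sum_ge:
  fixes f :: "'a \<Rightarrow> ennreal"
  assumes "finite I" "I \<noteq> {}" and sum_ge: "of_nat (card I) * c \<le> (\<Sum>i\<in>I. f i)"
  shows "\<exists>i\<in>I. c \<le> f i"
proof -
  have "Max (f ` I) \<in> f ` I"
    using assms(1,2) by simp
  then obtain i0 where "i0 \<in> I" "f i0 = Max (f ` I)"
    by (metis imageE)
  then have "f i \<le> f i0" if "i \<in> I" for i
    using assms(1) that by simp
  then have "(\<Sum>i\<in>I. f i) \<le> of_nat (card I) * f i0"
    by (rule sum_bounded_above)
  with sum_ge have "of_nat (card I) * c \<le> of_nat (card I) * f i0"
    by (rule order_trans)
  then have "c \<le> f i0"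
    using assms(1,2) by (simp add: ennreal_mult_le_mult_iff)
  with \<open>i0 \<in> I\<close> show ?thesis ..
qed

definition spike_weight :: "real \<Rightarrow> nat \<Rightarrow> nat \<Rightarrow> nat \<Rightarrow> real" where
  "spike_weight a k i m = (if k \<le> m then 0 else if m = i then a\<^sup>2 else 1) / (a\<^sup>2 + real k - 1)"

text \<open>The common neighbour \<open>Q\<^sub>i\<^sub>j\<close> of \<open>P\<^sub>i\<close> and \<open>P\<^sub>j\<close>: weight \<open>a\<close> on \<open>i\<close> and \<open>j\<close>, and on the other
  messages the filler weight that makes the total mass \<open>1\<close>.\<close>

definition twin_weight :: "real \<Rightarrow> nat \<Rightarrow> nat \<Rightarrow> nat \<Rightarrow> nat \<Rightarrow> real" where
  "twin_weight a k i j m =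
     (if k \<le> m then 0 else if m = i \<or> m = j then a else (a\<^sup>2 - 2 * a + real k - 1) / (real k - 2))
       / (a\<^sup>2 + real k - 1)"

definition spike_pmf :: "real \<Rightarrow> nat \<Rightarrow> nat \<Rightarrow> nat pmf" where
  "spike_pmf a k i = embed_pmf (spike_weight a k i)"

definition twin_pmf :: "real \<Rightarrow> nat \<Rightarrow> nat \<Rightarrow> nat \<Rightarrow> nat pmf" where
  "twin_pmf a k i j = embed_pmf (twin_weight a k i j)"

lemma spike_denominator_pos: "a \<ge> 1 \<Longrightarrow> k > 0 \<Longrightarrow> a\<^sup>2 + real k - 1 > 0"
  by (smt (verit) of_nat_0_less_iff one_le_power)

lemma sum_spike_profile:
  assumes "a \<ge> 1" "c < k"
  shows "(\<Sum>x<k. (if x = c then a\<^sup>2 else 1) / (a\<^sup>2 + real k - 1)) = 1"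
proof -
  have "(\<Sum>x<k. if x \<in> {c} then a\<^sup>2 else 1) = a\<^sup>2 + (real k - 1)"
    using assms(2) by (subst sum_if_mem_const) (auto simp: of_nat_diff)
  then show ?thesis
    using assms spike_denominator_pos[of a k] by (simp add: sum_divide_distrib[symmetric] add_diff_eq)
qed

lemma sum_spike_weight:
  assumes "a \<ge> 1" "i < k"
  shows "(\<Sum>m<k. spike_weight a k i m) = 1"
proof -
  have "(\<Sum>m<k. spike_weight a k i m) = (\<Sum>m<k. (if m = i then a\<^sup>2 else 1) / (a\<^sup>2 + real k - 1))"
    by (intro sum.cong) (auto simp: spike_weight_def)
  also have "\<dots> = 1"
    using assms by (rule sum_spike_profile)
  finally show ?thesis .
qed

lemma sum_spike_weight_index:
  assumes "a \<ge> 1" "m < k"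
  shows "(\<Sum>i<k. spike_weight a k i m) = 1"
proof -
  have "(\<Sum>i<k. spike_weight a k i m) = (\<Sum>i<k. (if i = m then a\<^sup>2 else 1) / (a\<^sup>2 + real k - 1))"
    using assms(2) by (intro sum.cong) (auto simp: spike_weight_def)
  also have "\<dots> = 1"
    using assms by (rule sum_spike_profile)
  finally show ?thesis .
qed

lemma pmf_spike_pmf:
  assumes "a \<ge> 1" "i < k"
  shows "pmf (spike_pmf a k i) m = spike_weight a k i m"
  unfolding spike_pmf_def
proof (rule pmf_embed_pmf_lessThan)
  show "(\<Sum>m<k. spike_weight a k i m) = 1"
    using assms by (rule sum_spike_weight)
qed (use assms spike_denominator_pos[of a k] in \<open>auto simp: spike_weight_def\<close>)

lemma set_pmf_spike_pmf:
  assumes "a \<ge> 1" "i < k"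
  shows "set_pmf (spike_pmf a k i) \<subseteq> {..<k}"
  using assms by (auto simp: set_pmf_iff pmf_spike_pmf spike_weight_def split: if_splits)

lemma twin_filler_bounds:
  fixes a :: real
  assumes "a \<ge> 1" "a + 1 \<le> k" "3 \<le> k"
  shows "1 \<le> (a\<^sup>2 - 2 * a + k - 1) / (k - 2)" "(a\<^sup>2 - 2 * a + k - 1) / (k - 2) \<le> a"
proof -
  have "k - 2 \<le> (a - 1)\<^sup>2 + (k - 2)"
    by simp
  then show "1 \<le> (a\<^sup>2 - 2 * a + k - 1) / (k - 2)"
    using assms(3) by (simp add: field_simps power2_eq_square)
  have "(a - 1) * (a + 1) \<le> (a - 1) * k"
    using assms(1,2) by (intro mult_left_mono) auto
  then show "(a\<^sup>2 - 2 * a + k - 1) / (k - 2) \<le> a"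
    using assms(3) by (simp add: field_simps power2_eq_square)
qed

lemma pmf_twin_pmf:
  assumes "a \<ge> 1" "a + 1 \<le> real k" "3 \<le> k" "i < k" "j < k" "i \<noteq> j"
  shows "pmf (twin_pmf a k i j) m = twin_weight a k i j m"
proof -
  define w where "w = (a\<^sup>2 - 2 * a + real k - 1) / (real k - 2)"
  have "1 \<le> w"
    using twin_filler_bounds[of a "real k"] assms by (simp add: w_def)
  have "(\<Sum>m<k. twin_weight a k i j m)
      = (\<Sum>m<k. if m \<in> {i, j} then a / (a\<^sup>2 + real k - 1) else w / (a\<^sup>2 + real k - 1))"
    by (intro sum.cong) (auto simp: twin_weight_def w_def)
  also have "\<dots> = 2 * (a / (a\<^sup>2 + real k - 1)) + (real k - 2) * (w / (a\<^sup>2 + real k - 1))"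
    using assms by (subst sum_if_mem_const) (auto simp: of_nat_diff)
  also have "\<dots> = (2 * a + (real k - 2) * w) / (a\<^sup>2 + real k - 1)"
    by (simp only: add_divide_distrib times_divide_eq_right)
  also have "(real k - 2) * w = a\<^sup>2 - 2 * a + real k - 1"
    using assms(3) by (simp add: w_def)
  also have "(2 * a + (a\<^sup>2 - 2 * a + real k - 1)) / (a\<^sup>2 + real k - 1) = 1"
    using assms spike_denominator_pos[of a k] by simp
  finally show ?thesis
    unfolding twin_pmf_def using assms \<open>1 \<le> w\<close> spike_denominator_pos[of a k]
    by (intro pmf_embed_pmf_lessThan) (auto simp: twin_weight_def w_def[symmetric])
qed

lemma alpha_close_spike_twin:
  assumes "a \<ge> 1" "a + 1 \<le> real k" "3 \<le> k" "i < k" "j < k" "i \<noteq> j"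
  shows "alpha_close a (spike_pmf a k i) (twin_pmf a k i j)"
proof -
  define w where "w = (a\<^sup>2 - 2 * a + real k - 1) / (real k - 2)"
  have w: "1 \<le> w" "w \<le> a"
    using twin_filler_bounds[of a "real k"] assms by (simp_all add: w_def)
  have "1 \<le> a * a" "1 \<le> a * w"
    using mult_mono[of 1 a 1 a] mult_mono[of 1 a 1 w] assms(1) w(1) by simp_all
  have "a \<le> a * a\<^sup>2"
    using mult_left_mono[OF one_le_power[of a 2]] assms(1) by simp
  show ?thesis
  proof (rule alpha_close_scaledI[where d = "a\<^sup>2 + real k - 1"
        and u = "\<lambda>m. if k \<le> m then 0 else if m = i then a\<^sup>2 else 1"
        and v = "\<lambda>m. if k \<le> m then 0 else if m = i \<or> m = j then a else w"])
    show "0 < a" "0 < a\<^sup>2 + real k - 1"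
      using assms spike_denominator_pos[of a k] by simp_all
    show "pmf (spike_pmf a k i) m = (if k \<le> m then 0 else if m = i then a\<^sup>2 else 1) / (a\<^sup>2 + real k - 1)"
      for m using assms by (simp add: pmf_spike_pmf spike_weight_def)
    show "pmf (twin_pmf a k i j) m = (if k \<le> m then 0 else if m = i \<or> m = j then a else w) / (a\<^sup>2 + real k - 1)"
      for m using assms by (simp add: pmf_twin_pmf twin_weight_def w_def)
  qed (use assms w \<open>1 \<le> a * a\<close> \<open>a \<le> a * a\<^sup>2\<close> \<open>1 \<le> a * w\<close> in \<open>auto simp: power2_eq_square\<close>)
qed

lemma twin_pmf_commute: "twin_pmf a k i j = twin_pmf a k j i"
  unfolding twin_pmf_def twin_weight_def by (rule arg_cong[where f = embed_pmf]) auto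

lemma spike_encodings_distinct:
  assumes "error_free_scheme E D" "real \<alpha> \<ge> 1" "real \<alpha> + 1 \<le> real k" "3 \<le> k" "i < k" "j < k"
    and "E m \<alpha> R (spike_pmf \<alpha> k i) = E m' \<alpha> R (spike_pmf \<alpha> k j)"
  shows "m = m'"
proof (cases "i = j")
  case True
  with assms show ?thesis
    by (intro error_free_scheme_encoding_eq_imp_eq[OF assms(1) alpha_close_refl alpha_close_refl]) auto
next
  case False
  then have "alpha_close \<alpha> (spike_pmf \<alpha> k i) (twin_pmf \<alpha> k i j)"
      "alpha_close \<alpha> (spike_pmf \<alpha> k j) (twin_pmf \<alpha> k i j)"
    using assms alpha_close_spike_twin[of \<alpha> k j i] by (auto intro: alpha_close_spike_twin simp: twin_pmf_commute)
  then show ?thesis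
    by (rule error_free_scheme_encoding_eq_imp_eq[OF assms(1) _ _ assms(7)])
qed

lemma opt_len_spike_pmf_le:
  assumes "a \<ge> 1" "i < 2 ^ T"
  shows "opt_len (spike_pmf a (2 ^ T) i) \<le> ennreal (T * ((2 ^ T - 1) / (a\<^sup>2 + 2 ^ T - 1)))"
proof -
  have "pmf (spike_pmf a (2 ^ T) i) i = a\<^sup>2 / (a\<^sup>2 + 2 ^ T - 1)"
    using assms by (simp add: pmf_spike_pmf spike_weight_def)
  moreover have "1 - a\<^sup>2 / (a\<^sup>2 + 2 ^ T - 1) = (2 ^ T - 1) / (a\<^sup>2 + 2 ^ T - 1)"
    using spike_denominator_pos[of a "2 ^ T"] assms(1) by (simp add: field_simps)
  ultimately show ?thesis
    using opt_len_le_off_point[OF set_pmf_spike_pmf[OF assms] assms(2)] by simp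
qed

lemma exists_spike_with_long_encoding:
  assumes ef: "error_free_scheme E D"
    and meas: "\<forall>m \<alpha> P. (\<lambda>R. real (length (E m \<alpha> R P))) \<in> borel_measurable coins"
    and "2 \<le> \<alpha>" "real \<alpha> + 1 \<le> 2 ^ T"
  shows "\<exists>i < 2 ^ T. ennreal (real T - 2) \<le> enc_length E (spike_pmf \<alpha> (2 ^ T) i) \<alpha>"
proof -
  define k :: nat where "k = 2 ^ T"
  have "real \<alpha> \<ge> 1" "real \<alpha> + 1 \<le> real k"
    using assms(3,4) by (simp_all add: k_def)
  moreover from this have "3 \<le> k"
    using assms(3) by linarith
  ultimately have "ennreal (real T * k - 2 ^ (T + 1) + 2) \<le> (\<Sum>i<k. enc_length E (spike_pmf \<alpha> k i) \<alpha>)"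
    using meas spike_encodings_distinct[OF ef]
    by (intro sum_enc_length_ge) (auto simp: set_pmf_spike_pmf pmf_spike_pmf sum_spike_weight_index)
  moreover have "of_nat (card {..<k}) * ennreal (real T - 2) \<le> ennreal (real T * k - 2 ^ (T + 1) + 2)"
    by (simp add: k_def ennreal_of_nat_eq_real_of_nat algebra_simps ennreal_leI flip: ennreal_mult')
  ultimately obtain i where "i \<in> {..<k}" "ennreal (real T - 2) \<le> enc_length E (spike_pmf \<alpha> k i) \<alpha>"
    using ex_ge_of_sum_ge[of "{..<k}"] by (force simp: k_def)
  then show ?thesis
    by (auto simp: k_def)
qed

lemma two_mult_add_one_le_two_power: "3 \<le> q \<Longrightarrow> 2 * q + 1 \<le> (2 :: nat) ^ q"
proof (induction q rule: dec_induct)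
  case (step q)
  then have "4 \<le> (2 :: nat) ^ q"
    using power_increasing[of 2 q "2 :: nat"] by simp
  with step show ?case
    by simp
qed simp

lemma log2_le_half: "6 \<le> n \<Longrightarrow> log 2 (real n) \<le> real n / 2"
proof -
  assume "6 \<le> n"
  then have "n \<le> 2 ^ (n div 2)"
    using two_mult_add_one_le_two_power[of "n div 2"] by linarith
  then have "real n \<le> 2 ^ (n div 2)"
    by simp
  then have "log 2 (real n) \<le> log 2 (2 ^ (n div 2))"
    using \<open>6 \<le> n\<close> by (intro log_mono) auto
  also have "\<dots> = real (n div 2)"
    by (simp add: log_nat_power)
  also have "\<dots> \<le> real n / 2"
    by linarith
  finally show ?thesis .
qed

lemma nat_floor_log2_bounds:
  fixes y :: real
  assumes "1 \<le> y"
  defines "T \<equiv> nat \<lfloor>log 2 y\<rfloor>"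
  shows "2 ^ T \<le> y" "y < 2 * 2 ^ T" "log 2 y - 1 < T" "T \<le> log 2 y"
proof -
  have T: "real T = \<lfloor>log 2 y\<rfloor>"
    using assms(1) by (simp add: T_def)
  have "2 powr \<lfloor>log 2 y\<rfloor> \<le> y" "y < 2 powr (\<lfloor>log 2 y\<rfloor> + 1)"
    using assms(1) floor_log_eq_powr_iff[of y 2 "\<lfloor>log 2 y\<rfloor>"] by simp_all
  moreover have "(2 :: real) ^ T = 2 powr real T"
    by (simp add: powr_realpow)
  ultimately show "2 ^ T \<le> y" "y < 2 * 2 ^ T"
    using T by (simp_all add: powr_add)
  show "log 2 y - 1 < T" "T \<le> log 2 y"
    using T by linarith+
qed

lemma spike_size_bounds:
  fixes \<alpha> :: nat
  assumes "64 \<le> \<alpha>"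
  defines "x \<equiv> log 2 (real \<alpha>)"
  defines "T \<equiv> nat \<lfloor>log 2 (real \<alpha> ^ 2 / x)\<rfloor>"
  shows "real \<alpha> + 1 \<le> 2 ^ T" "T * ((2 ^ T - 1) / (real \<alpha> ^ 2 + 2 ^ T - 1)) \<le> 2"
    "2 * x - log 2 x - 1 \<le> T" "1 \<le> x"
proof -
  define y where "y = real \<alpha> ^ 2 / x"
  have "log 2 64 \<le> x"
    unfolding x_def using assms(1) by (intro log_mono) auto
  moreover have "log 2 (64 :: real) = 6"
    using log_nat_power[of "2 :: real" 2 6] by simp
  ultimately have "6 \<le> x"
    by simp
  then show "1 \<le> x"
    by simp
  have "x \<le> real \<alpha> / 2"
    unfolding x_def using assms(1) by (intro log2_le_half) simp
  then have "2 * real \<alpha> \<le> y" "y \<le> real \<alpha> ^ 2"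
    using \<open>6 \<le> x\<close> assms(1) by (simp_all add: y_def field_simps power2_eq_square)
  then have "y \<ge> 1"
    using assms(1) by simp
  moreover have "nat \<lfloor>log 2 y\<rfloor> = T"
    by (simp add: T_def y_def)
  ultimately have T_floor: "2 ^ T \<le> y" "y < 2 * 2 ^ T" "log 2 y - 1 < T" "T \<le> log 2 y"
    using nat_floor_log2_bounds[of y] by simp_all
  show "real \<alpha> + 1 \<le> 2 ^ T"
  proof -
    have "real \<alpha> < 2 ^ T"
      using T_floor \<open>2 * real \<alpha> \<le> y\<close> by linarith
    then have "\<alpha> + 1 \<le> 2 ^ T"
      by simp
    then have "real (\<alpha> + 1) \<le> real (2 ^ T)"
      by (simp only: of_nat_le_iff)
    then show ?thesis
      by simp
  qed
  have "real T \<le> log 2 y"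
    by (fact T_floor(4))
  also have "\<dots> \<le> log 2 (real \<alpha> ^ 2)"
    using \<open>y \<ge> 1\<close> \<open>y \<le> real \<alpha> ^ 2\<close> by (intro log_mono) auto
  also have "\<dots> = 2 * x"
    unfolding x_def using assms(1) by (simp add: log_nat_power)
  finally have "real T \<le> 2 * x" .
  have "T * ((2 ^ T - 1) / (real \<alpha> ^ 2 + 2 ^ T - 1)) \<le> 2 * x * (2 ^ T / real \<alpha> ^ 2)"
  proof (rule mult_mono)
    have "(1 :: real) \<le> 2 ^ T"
      by simp
    then show "0 \<le> (2 ^ T - 1) / (real \<alpha> ^ 2 + 2 ^ T - 1)"
      using zero_le_power2[of "real \<alpha>"] by (intro divide_nonneg_nonneg) linarith+
    show "(2 ^ T - 1) / (real \<alpha> ^ 2 + 2 ^ T - 1) \<le> 2 ^ T / real \<alpha> ^ 2"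
      using \<open>1 \<le> 2 ^ T\<close> assms(1) by (intro frac_le) auto
  qed (use \<open>real T \<le> 2 * x\<close> \<open>6 \<le> x\<close> in auto)
  also have "\<dots> \<le> 2"
    using T_floor(1) \<open>6 \<le> x\<close> assms(1) by (simp add: y_def field_simps)
  finally show "T * ((2 ^ T - 1) / (real \<alpha> ^ 2 + 2 ^ T - 1)) \<le> 2" .
  have "log 2 y = 2 * x - log 2 x"
    using \<open>6 \<le> x\<close> assms(1) by (simp add: y_def x_def log_divide log_nat_power)
  then show "2 * x - log 2 x - 1 \<le> T"
    using T_floor(3) by linarith
qed

lemma enn2ereal_add_ereal_le:
  assumes "a \<le> ennreal r" "0 \<le> r" "ennreal s \<le> b" "r + t \<le> s"
  shows "enn2ereal a + ereal t \<le> enn2ereal b"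
proof -
  have "enn2ereal a + ereal t \<le> ereal r + ereal t"
    using assms(1,2) by (intro add_right_mono) (simp add: less_eq_ennreal.rep_eq)
  also have "\<dots> \<le> ereal s"
    using assms(4) by simp
  also have "\<dots> \<le> enn2ereal (ennreal s)"
    by (cases "0 \<le> s") (simp_all add: enn2ereal_ennreal ennreal_neg zero_ennreal.rep_eq)
  also have "\<dots> \<le> enn2ereal b"
    using assms(3) by (simp add: less_eq_ennreal.rep_eq)
  finally show ?thesis .
qed

lemma error_free_scheme_redundancy_ge:
  assumes ef: "error_free_scheme E D"
    and meas: "\<forall>m \<alpha> P. (\<lambda>R. real (length (E m \<alpha> R P))) \<in> borel_measurable coins"
    and "64 \<le> \<alpha>"
  shows "\<exists>P Q. alpha_close (real \<alpha>) P Q \<and> opt_len P < \<infinity> \<and>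
           enn2ereal (enc_length E P \<alpha>) \<ge>
             enn2ereal (opt_len P) + ereal (2 * log 2 \<alpha> - 3 * log 2 (log 2 \<alpha>) - 5)"
proof -
  define x where "x = log 2 (real \<alpha>)"
  define T where "T = nat \<lfloor>log 2 (real \<alpha> ^ 2 / x)\<rfloor>"
  note bounds = spike_size_bounds[OF \<open>64 \<le> \<alpha>\<close>, folded x_def, folded T_def]
  obtain i where "i < 2 ^ T" and long: "ennreal (real T - 2) \<le> enc_length E (spike_pmf \<alpha> (2 ^ T) i) \<alpha>"
    using exists_spike_with_long_encoding[OF ef meas _ bounds(1)] \<open>64 \<le> \<alpha>\<close> by auto
  have "opt_len (spike_pmf \<alpha> (2 ^ T) i) \<le> ennreal (T * ((2 ^ T - 1) / (real \<alpha> ^ 2 + 2 ^ T - 1)))"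
    using \<open>64 \<le> \<alpha>\<close> \<open>i < 2 ^ T\<close> by (intro opt_len_spike_pmf_le) auto
  also have "\<dots> \<le> ennreal 2"
    using bounds(2) by (rule ennreal_leI)
  finally have short: "opt_len (spike_pmf \<alpha> (2 ^ T) i) \<le> ennreal 2" .
  have "0 \<le> log 2 x"
    using bounds(4) by simp
  then have "enn2ereal (opt_len (spike_pmf \<alpha> (2 ^ T) i)) + ereal (2 * x - 3 * log 2 x - 5)
      \<le> enn2ereal (enc_length E (spike_pmf \<alpha> (2 ^ T) i) \<alpha>)"
    using bounds(3) by (intro enn2ereal_add_ereal_le[OF short _ long]) auto
  moreover have "opt_len (spike_pmf \<alpha> (2 ^ T) i) < \<infinity>"
    using short by (simp add: le_less_trans)
  moreover have "alpha_close \<alpha> (spike_pmf \<alpha> (2 ^ T) i) (spike_pmf \<alpha> (2 ^ T) i)"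
    using \<open>64 \<le> \<alpha>\<close> by (intro alpha_close_refl) simp
  ultimately show ?thesis
    unfolding x_def by blast
qed

theorem theorem2:
  shows "\<exists>(C::real) (\<alpha>0::nat). \<forall>E D. error_free_scheme E D \<longrightarrow>
     (\<forall>m \<alpha> P. (\<lambda>R. real (length (E m \<alpha> R P))) \<in> borel_measurable coins) \<longrightarrow>
     (\<forall>\<alpha>::nat. \<alpha> \<ge> \<alpha>0 \<longrightarrow>
        (\<exists>P Q. alpha_close (real \<alpha>) P Q \<and> opt_len P < \<infinity> \<and>
           enn2ereal (enc_length E P \<alpha>) \<ge>
             enn2ereal (opt_len P) + ereal (2 * log 2 \<alpha> - 3 * log 2 (log 2 \<alpha>) - C)))"
  using error_free_scheme_redundancy_ge by (intro exI[of _ 5] exI[of _ 64]) blast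

end
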